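(* Let $A,B,s>0$ and $p$ a positive integer, with $s\ge1$ and $p\le\sqrt B$. Then \[ \frac{p^2}{e}\le\sum_{\substack{k_1,k_2\in\mathbb{Z}\\ |k_1p-A|\le s\sqrt B,\ |k_2p-A|\le s\sqrt B}}(k_1p-k_2p)^2\exp\left(-\frac{(k_1p-A)^2}{2B}-\frac{(k_2p-A)^2}{2B}\right)\le\frac{24e^4\pi B^2}{p^2}. \] *)

theory Defs
  imports "HOL-Analysis.Analysis"
begin

end

theory Submission
  imports Defs
begin

(* Write x_k = k p - A, \<sigma> = sqrt B and w_k = exp (- x_k^2 / (2 B)).
   Lower bound: some two consecutive lattice points k, k + 1 lie within \<sigma> of A, and the
   term of the pair (k + 1, k) alone is p^2 w_(k+1) w_k \<ge> p^2 e^(-1/2) e^(-1/2).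
   Upper bound: (x_a - x_b)^2 \<le> 2 x_a^2 + 2 x_b^2 bounds the double sum by
   4 (\<Sum> x_k^2 w_k) (\<Sum> w_k). The Gaussian weights are dominated by exponentials,
   w_k \<le> e^(1/2) e^(-|x_k|/\<sigma>) and x_k^2 w_k \<le> 4 B e^(-|x_k|/\<sigma>), and the lattice sum
   of e^(-|x_k|/\<sigma>) splits into two geometric series with ratio e^(-p/\<sigma>), hence is at
   most 4 \<sigma> / p. Altogether the sum is at most 256 e^(1/2) B^2 / p^2 \<le> 24 e^4 \<pi> B^2 / p^2. *)

lemma sum_le_geometric_series:
  fixes f :: "'a \<Rightarrow> real" and g :: "'a \<Rightarrow> nat"
  assumes "finite K" "inj_on g K" "0 \<le> r" "r < 1" "\<And>k. k \<in> K \<Longrightarrow> f k \<le> r ^ g k"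
  shows "sum f K \<le> 1 / (1 - r)"
proof -
  have "sum f K \<le> (\<Sum>k\<in>K. r ^ g k)" using assms(5) by (rule sum_mono)
  also have "\<dots> = (\<Sum>n\<in>g ` K. r ^ n)" using assms(2) by (simp add: sum.reindex)
  also have "\<dots> \<le> (\<Sum>n. r ^ n)"
    by (rule sum_le_suminf) (use assms in \<open>auto intro: summable_geometric\<close>)
  also have "\<dots> = 1 / (1 - r)" using assms by (simp add: suminf_geometric)
  finally show ?thesis .
qed

lemma one_minus_exp_neg_ge_half:
  fixes t :: real
  assumes "0 < t" "t \<le> 1"
  shows "t / 2 \<le> 1 - exp (- t)"
proof -
  have "1 + t \<le> exp t" by (rule exp_ge_add_one_self)
  then have "exp (- t) \<le> 1 / (1 + t)"
    using assms by (simp add: exp_minus field_simps)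
  also have "\<dots> \<le> 1 - t / 2"
    using assms mult_left_le[of t t] by (simp add: field_simps)
  finally show ?thesis by simp
qed

lemma sum_exp_neg_lattice_dist_right_le:
  fixes K :: "int set" and p \<sigma> A :: real
  assumes "finite K" "0 < p" "0 < \<sigma>" "\<And>k. k \<in> K \<Longrightarrow> A \<le> of_int k * p"
  shows "(\<Sum>k\<in>K. exp (- \<bar>of_int k * p - A\<bar> / \<sigma>)) \<le> 1 / (1 - exp (- p / \<sigma>))"
proof -
  define k0 where "k0 = \<lceil>A / p\<rceil>"
  have "A \<le> of_int k0 * p"
    using \<open>0 < p\<close> unfolding k0_def by (metis le_of_int_ceiling pos_divide_le_eq)
  have k0_le: "k0 \<le> k" if "k \<in> K" for k
    using assms(4)[OF that] \<open>0 < p\<close> by (simp add: k0_def ceiling_le_iff pos_divide_le_eq)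
  show ?thesis
  proof (rule sum_le_geometric_series[where g = "\<lambda>k. nat (k - k0)"])
    show "inj_on (\<lambda>k. nat (k - k0)) K"
      using k0_le by (auto simp: inj_on_def eq_nat_nat_iff)
    fix k assume "k \<in> K"
    define n where "n = nat (k - k0)"
    have "real n * p = of_int k * p - of_int k0 * p"
      using k0_le[OF \<open>k \<in> K\<close>] by (simp add: n_def left_diff_distrib)
    then have "real n * p \<le> \<bar>of_int k * p - A\<bar>"
      using \<open>A \<le> of_int k0 * p\<close> abs_ge_self[of "of_int k * p - A"] by linarith
    then have "exp (- \<bar>of_int k * p - A\<bar> / \<sigma>) \<le> exp (real n * (- p / \<sigma>))"
      using \<open>0 < \<sigma>\<close> by (simp add: divide_right_mono)
    then show "exp (- \<bar>of_int k * p - A\<bar> / \<sigma>) \<le> exp (- p / \<sigma>) ^ n"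
      by (metis exp_of_nat_mult)
  qed (use assms in auto)
qed

lemma sum_exp_neg_lattice_dist_le:
  fixes K :: "int set" and p \<sigma> A :: real
  assumes "finite K" "0 < p" "p \<le> \<sigma>"
  shows "(\<Sum>k\<in>K. exp (- \<bar>of_int k * p - A\<bar> / \<sigma>)) \<le> 4 * \<sigma> / p"
proof -
  let ?f = "\<lambda>A k. exp (- \<bar>of_int k * p - A\<bar> / \<sigma>)"
  define H where "H = {k. A \<le> of_int k * p}"
  have "p / \<sigma> / 2 \<le> 1 - exp (- (p / \<sigma>))"
    using assms by (intro one_minus_exp_neg_ge_half) auto
  then have "1 / (1 - exp (- p / \<sigma>)) \<le> 1 / (p / \<sigma> / 2)"
    using assms by (intro divide_left_mono) auto
  also have "\<dots> = 2 * \<sigma> / p" by simp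
  finally have geometric: "1 / (1 - exp (- p / \<sigma>)) \<le> 2 * \<sigma> / p" .
  have "0 < \<sigma>" using assms by linarith
  have "sum (?f A) (K \<inter> H) \<le> 1 / (1 - exp (- p / \<sigma>))"
    by (rule sum_exp_neg_lattice_dist_right_le) (use assms \<open>0 < \<sigma>\<close> in \<open>simp_all add: H_def\<close>)
  \<comment> \<open>the points left of \<open>A\<close> are the points right of \<open>- A\<close> after reflecting \<open>k \<mapsto> - k\<close>\<close>
  moreover have "sum (?f A) (K - H) = sum (?f (- A)) (uminus ` (K - H))"
    by (simp add: sum.reindex abs_minus_commute)
  moreover have "sum (?f (- A)) (uminus ` (K - H)) \<le> 1 / (1 - exp (- p / \<sigma>))"
    by (rule sum_exp_neg_lattice_dist_right_le) (use assms \<open>0 < \<sigma>\<close> in \<open>auto simp: H_def\<close>)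
  ultimately show ?thesis
    using sum.Int_Diff[OF \<open>finite K\<close>, of "?f A" H] geometric by simp
qed

lemma gaussian_le_exp_neg_abs:
  fixes x \<sigma> :: real
  assumes "0 < \<sigma>"
  shows "exp (- (x\<^sup>2 / (2 * \<sigma>\<^sup>2))) \<le> exp (1 / 2) * exp (- \<bar>x\<bar> / \<sigma>)"
proof -
  define u where "u = \<bar>x\<bar> / \<sigma>"
  have "x\<^sup>2 / (2 * \<sigma>\<^sup>2) = u\<^sup>2 / 2"
    using assms by (simp add: u_def power_divide)
  moreover have "u - 1 / 2 \<le> u\<^sup>2 / 2"
    using zero_le_power2[of "u - 1"] by (simp add: power2_eq_square algebra_simps)
  ultimately have "- (x\<^sup>2 / (2 * \<sigma>\<^sup>2)) \<le> 1 / 2 + - \<bar>x\<bar> / \<sigma>"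
    by (simp add: u_def)
  then show ?thesis by (simp add: mult_exp_exp)
qed

lemma sq_mult_gaussian_le_exp_neg_abs:
  fixes x \<sigma> :: real
  assumes "0 < \<sigma>"
  shows "x\<^sup>2 * exp (- (x\<^sup>2 / (2 * \<sigma>\<^sup>2))) \<le> 4 * \<sigma>\<^sup>2 * exp (- \<bar>x\<bar> / \<sigma>)"
proof -
  define u where "u = \<bar>x\<bar> / \<sigma>"
  have x_sq: "x\<^sup>2 = \<sigma>\<^sup>2 * u\<^sup>2" and exponent: "x\<^sup>2 / (2 * \<sigma>\<^sup>2) = u\<^sup>2 / 2"
    using assms by (simp_all add: u_def power_divide)
  have "u\<^sup>2 \<le> 4 * (1 + (u\<^sup>2 / 2 - u))"
    using zero_le_power2[of "u - 2"] by (simp add: power2_eq_square algebra_simps)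
  also have "\<dots> \<le> 4 * exp (u\<^sup>2 / 2 - u)"
    by (intro mult_left_mono exp_ge_add_one_self) simp
  finally have "u\<^sup>2 * exp (- (u\<^sup>2 / 2)) \<le> 4 * exp (u\<^sup>2 / 2 - u) * exp (- (u\<^sup>2 / 2))"
    by (rule mult_right_mono) simp
  also have "\<dots> = 4 * exp (- u)"
    by (simp add: mult.assoc mult_exp_exp)
  finally have "\<sigma>\<^sup>2 * (u\<^sup>2 * exp (- (u\<^sup>2 / 2))) \<le> \<sigma>\<^sup>2 * (4 * exp (- u))"
    by (rule mult_left_mono) simp
  then show ?thesis
    by (simp add: x_sq exponent u_def mult_ac)
qed

lemma sum_sq_diff_weighted_le:
  fixes x w :: "'a \<Rightarrow> real"
  assumes "\<And>k. k \<in> K \<Longrightarrow> 0 \<le> w k"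
  shows "(\<Sum>(a, b)\<in>K \<times> K. (x a - x b)\<^sup>2 * (w a * w b))
           \<le> 4 * (\<Sum>k\<in>K. (x k)\<^sup>2 * w k) * sum w K"
proof -
  have "(\<Sum>(a, b)\<in>K \<times> K. (x a - x b)\<^sup>2 * (w a * w b))
          \<le> (\<Sum>(a, b)\<in>K \<times> K. 2 * ((x a)\<^sup>2 * w a) * w b + 2 * w a * ((x b)\<^sup>2 * w b))"
  proof (rule sum_mono, clarify)
    fix a b assume "a \<in> K" "b \<in> K"
    have "(x a - x b)\<^sup>2 \<le> 2 * (x a)\<^sup>2 + 2 * (x b)\<^sup>2"
      using zero_le_power2[of "x a + x b"] by (simp add: power2_eq_square algebra_simps)
    then have "(x a - x b)\<^sup>2 * (w a * w b) \<le> (2 * (x a)\<^sup>2 + 2 * (x b)\<^sup>2) * (w a * w b)"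
      using assms \<open>a \<in> K\<close> \<open>b \<in> K\<close> by (intro mult_right_mono) auto
    then show "(x a - x b)\<^sup>2 * (w a * w b) \<le> 2 * ((x a)\<^sup>2 * w a) * w b + 2 * w a * ((x b)\<^sup>2 * w b)"
      by (simp add: algebra_simps)
  qed
  also have "\<dots> = (\<Sum>a\<in>K. \<Sum>b\<in>K. 2 * ((x a)\<^sup>2 * w a) * w b)
                + (\<Sum>a\<in>K. \<Sum>b\<in>K. 2 * w a * ((x b)\<^sup>2 * w b))"
    by (simp only: sum.cartesian_product[symmetric] sum.distrib)
  also have "\<dots> = (\<Sum>a\<in>K. 2 * ((x a)\<^sup>2 * w a)) * sum w K
                + (\<Sum>a\<in>K. 2 * w a) * (\<Sum>b\<in>K. (x b)\<^sup>2 * w b)"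
    by (simp only: sum_product)
  also have "\<dots> = 4 * (\<Sum>k\<in>K. (x k)\<^sup>2 * w k) * sum w K"
    by (simp only: sum_distrib_left[symmetric]) (simp add: algebra_simps)
  finally show ?thesis .
qed

lemma exists_consecutive_lattice_points:
  fixes p \<sigma> A :: real
  assumes "0 < p" "p \<le> \<sigma>"
  shows "\<exists>k::int. \<bar>of_int k * p - A\<bar> \<le> \<sigma> \<and> \<bar>of_int (k + 1) * p - A\<bar> \<le> \<sigma>"
proof
  define k where "k = \<lceil>(A - \<sigma>) / p\<rceil>"
  have "A - \<sigma> \<le> of_int k * p"
    using \<open>0 < p\<close> unfolding k_def by (metis le_of_int_ceiling pos_divide_le_eq)
  moreover have "of_int k * p \<le> A - \<sigma> + p"
    using of_int_ceiling_le_add_one[of "(A - \<sigma>) / p"] \<open>0 < p\<close>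
    unfolding k_def by (simp add: pos_le_divide_eq field_simps)
  ultimately show "\<bar>of_int k * p - A\<bar> \<le> \<sigma> \<and> \<bar>of_int (k + 1) * p - A\<bar> \<le> \<sigma>"
    using assms by (simp add: abs_le_iff algebra_simps)
qed

lemma finite_lattice_points_within:
  fixes p A r :: real
  assumes "0 < p"
  shows "finite {k::int. \<bar>of_int k * p - A\<bar> \<le> r}"
proof (rule finite_subset)
  show "{k::int. \<bar>of_int k * p - A\<bar> \<le> r} \<subseteq> {\<lfloor>(A - r) / p\<rfloor>..\<lceil>(A + r) / p\<rceil>}"
  proof
    fix k assume "k \<in> {k::int. \<bar>of_int k * p - A\<bar> \<le> r}"
    then have "(A - r) / p \<le> of_int k" "of_int k \<le> (A + r) / p"
      using assms by (auto simp: abs_le_iff pos_divide_le_eq pos_le_divide_eq)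
    then show "k \<in> {\<lfloor>(A - r) / p\<rfloor>..\<lceil>(A + r) / p\<rceil>}"
      by (simp add: floor_le_iff le_ceiling_iff)
  qed
qed simp

lemma exp_half_256_le_exp_4_pi: "256 * exp (1 / 2) \<le> 24 * exp 4 * (pi :: real)"
proof -
  have "exp (4 :: real) = exp (1 / 2) * exp (7 / 2)" by (simp flip: exp_add)
  moreover have "1 + 7 / 2 \<le> exp (7 / 2 :: real)" by (rule exp_ge_add_one_self)
  ultimately have "256 * exp (1 / 2) \<le> 72 * exp (4 :: real)" by simp
  also have "\<dots> \<le> 24 * exp 4 * pi" using pi_gt3 by simp
  finally show ?thesis .
qed

definition gaussian_pair_sum :: "int set \<Rightarrow> real \<Rightarrow> real \<Rightarrow> real \<Rightarrow> real" where
  "gaussian_pair_sum K p A \<sigma> = (\<Sum>(a, b)\<in>K \<times> K. (of_int a * p - of_int b * p)\<^sup>2 *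
     (exp (- ((of_int a * p - A)\<^sup>2 / (2 * \<sigma>\<^sup>2))) * exp (- ((of_int b * p - A)\<^sup>2 / (2 * \<sigma>\<^sup>2)))))"

lemma gaussian_pair_sum_ge:
  fixes K :: "int set" and p \<sigma> A :: real
  assumes "finite K" "0 < p" "p \<le> \<sigma>" "\<And>k. \<bar>of_int k * p - A\<bar> \<le> \<sigma> \<Longrightarrow> k \<in> K"
  shows "p\<^sup>2 / exp 1 \<le> gaussian_pair_sum K p A \<sigma>"
proof -
  let ?w = "\<lambda>k. exp (- ((of_int k * p - A)\<^sup>2 / (2 * \<sigma>\<^sup>2)))"
  obtain k where k: "\<bar>of_int k * p - A\<bar> \<le> \<sigma>" "\<bar>of_int (k + 1) * p - A\<bar> \<le> \<sigma>"
    using exists_consecutive_lattice_points[OF \<open>0 < p\<close> \<open>p \<le> \<sigma>\<close>] by blast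
  have weight_ge: "exp (- 1 / 2) \<le> ?w j" if "\<bar>of_int j * p - A\<bar> \<le> \<sigma>" for j
  proof -
    have "(of_int j * p - A)\<^sup>2 \<le> \<sigma>\<^sup>2"
      using power_mono[OF that abs_ge_zero, of 2] by simp
    then show ?thesis using assms by (simp add: field_simps)
  qed
  have "p\<^sup>2 / exp 1 = p\<^sup>2 * (exp (- 1 / 2) * exp (- 1 / 2))"
    by (simp add: mult_exp_exp exp_minus field_simps)
  also have "\<dots> \<le> p\<^sup>2 * (?w (k + 1) * ?w k)"
    using weight_ge[OF k(1)] weight_ge[OF k(2)] by (intro mult_left_mono mult_mono) auto
  also have "\<dots> = (of_int (k + 1) * p - of_int k * p)\<^sup>2 * (?w (k + 1) * ?w k)"
    by (simp add: algebra_simps)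
  also have "\<dots> \<le> gaussian_pair_sum K p A \<sigma>"
    unfolding gaussian_pair_sum_def
    using member_le_sum[of "(k + 1, k)" "K \<times> K" "\<lambda>(a, b). (of_int a * p - of_int b * p)\<^sup>2 * (?w a * ?w b)"]
      assms k by auto
  finally show ?thesis .
qed

lemma gaussian_pair_sum_le:
  fixes K :: "int set" and p \<sigma> A :: real
  assumes "finite K" "0 < p" "p \<le> \<sigma>"
  shows "gaussian_pair_sum K p A \<sigma> \<le> 256 * exp (1 / 2) * \<sigma> ^ 4 / p\<^sup>2"
proof -
  define x where "x k = of_int k * p - A" for k :: int
  define w where "w k = exp (- ((x k)\<^sup>2 / (2 * \<sigma>\<^sup>2)))" for k
  define G where "G = (\<Sum>k\<in>K. exp (- \<bar>x k\<bar> / \<sigma>))"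
  have "0 < \<sigma>" using assms by linarith
  have G_le: "G \<le> 4 * \<sigma> / p"
    unfolding G_def x_def using assms by (rule sum_exp_neg_lattice_dist_le)
  have "0 \<le> G" unfolding G_def by (simp add: sum_nonneg)
  have weights_le: "sum w K \<le> exp (1 / 2) * G"
    unfolding G_def sum_distrib_left w_def
    by (intro sum_mono gaussian_le_exp_neg_abs \<open>0 < \<sigma>\<close>)
  have moments_le: "(\<Sum>k\<in>K. (x k)\<^sup>2 * w k) \<le> 4 * \<sigma>\<^sup>2 * G"
    unfolding G_def sum_distrib_left w_def
    by (intro sum_mono sq_mult_gaussian_le_exp_neg_abs \<open>0 < \<sigma>\<close>)
  have "gaussian_pair_sum K p A \<sigma> = (\<Sum>(a, b)\<in>K \<times> K. (x a - x b)\<^sup>2 * (w a * w b))"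
    by (simp add: gaussian_pair_sum_def x_def w_def)
  also have "\<dots> \<le> 4 * (\<Sum>k\<in>K. (x k)\<^sup>2 * w k) * sum w K"
    by (rule sum_sq_diff_weighted_le) (simp add: w_def)
  also have "\<dots> \<le> 4 * (4 * \<sigma>\<^sup>2 * G) * (exp (1 / 2) * G)"
    using weights_le moments_le \<open>0 \<le> G\<close>
    by (intro mult_mono mult_left_mono) (auto intro!: sum_nonneg simp: w_def)
  also have "\<dots> = 16 * exp (1 / 2) * \<sigma>\<^sup>2 * G\<^sup>2"
    by (simp add: power2_eq_square)
  also have "\<dots> \<le> 16 * exp (1 / 2) * \<sigma>\<^sup>2 * (4 * \<sigma> / p)\<^sup>2"
    using G_le \<open>0 \<le> G\<close> by (intro mult_left_mono power_mono) auto
  also have "\<dots> = 256 * exp (1 / 2) * \<sigma> ^ 4 / p\<^sup>2"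
    by (simp add: power_divide field_simps power2_eq_square power4_eq_xxxx)
  finally show ?thesis .
qed

theorem claim6p2:
  fixes A B s :: real and p :: nat
  assumes "A > 0" "B > 0" "s > 0" "s \<ge> 1" "p > 0" "real p \<le> sqrt B"
  shows "real p ^ 2 / exp 1 \<le>
      (\<Sum>(k1, k2) \<in> {(k1::int, k2::int). \<bar>of_int k1 * real p - A\<bar> \<le> s * sqrt B \<and>
                                           \<bar>of_int k2 * real p - A\<bar> \<le> s * sqrt B}.
         (of_int k1 * real p - of_int k2 * real p) ^ 2 *
         exp (- ((of_int k1 * real p - A) ^ 2 / (2 * B)) - (of_int k2 * real p - A) ^ 2 / (2 * B)))
    \<and>
      (\<Sum>(k1, k2) \<in> {(k1::int, k2::int). \<bar>of_int k1 * real p - A\<bar> \<le> s * sqrt B \<and>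
                                           \<bar>of_int k2 * real p - A\<bar> \<le> s * sqrt B}.
         (of_int k1 * real p - of_int k2 * real p) ^ 2 *
         exp (- ((of_int k1 * real p - A) ^ 2 / (2 * B)) - (of_int k2 * real p - A) ^ 2 / (2 * B)))
      \<le> 24 * exp 4 * pi * B ^ 2 / real p ^ 2"
proof -
  define \<sigma> where "\<sigma> = sqrt B"
  define K where "K = {k::int. \<bar>of_int k * real p - A\<bar> \<le> s * \<sigma>}"
  have B_eq: "B = \<sigma>\<^sup>2" and p_le: "real p \<le> \<sigma>" and "0 < real p"
    using assms by (simp_all add: \<sigma>_def)
  have "finite K"
    unfolding K_def using \<open>0 < real p\<close> by (rule finite_lattice_points_within)
  have near_in_K: "k \<in> K" if "\<bar>of_int k * real p - A\<bar> \<le> \<sigma>" for k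
  proof -
    have "\<sigma> \<le> s * \<sigma>" using assms p_le by simp
    with that show ?thesis unfolding K_def by simp
  qed
  have "real p ^ 2 / exp 1 \<le> gaussian_pair_sum K (real p) A \<sigma>"
    using \<open>finite K\<close> \<open>0 < real p\<close> p_le near_in_K by (rule gaussian_pair_sum_ge)
  moreover have "gaussian_pair_sum K (real p) A \<sigma> \<le> 24 * exp 4 * pi * B ^ 2 / real p ^ 2"
  proof -
    have "B ^ 2 = \<sigma> ^ 4" by (simp add: B_eq flip: power_mult)
    then have "256 * exp (1 / 2) * \<sigma> ^ 4 / real p ^ 2 \<le> 24 * exp 4 * pi * B ^ 2 / real p ^ 2"
      by (simp only:) (intro divide_right_mono mult_right_mono exp_half_256_le_exp_4_pi; simp)
    with gaussian_pair_sum_le[OF \<open>finite K\<close> \<open>0 < real p\<close> p_le] show ?thesis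
      by (rule order_trans)
  qed
  moreover have "{(k1, k2). \<bar>of_int k1 * real p - A\<bar> \<le> s * sqrt B \<and>
                            \<bar>of_int k2 * real p - A\<bar> \<le> s * sqrt B} = K \<times> K"
    by (auto simp: K_def \<sigma>_def)
  moreover have "exp (- x - y) = exp (- x) * exp (- y)" for x y :: real
    by (simp flip: exp_add)
  ultimately show ?thesis
    unfolding gaussian_pair_sum_def B_eq by simp
qed

end
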